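(* Let $A=[a_{ij}]\in\{0,1\}^{N\times N}$ be the adjacency matrix of a static contact graph on nodes $\{1,\dots,N\}$ (with $a_{ii}=0$), let $\beta_0>0$, $\delta>0$, $\kappa>0$, $0\le\beta_a<\beta_0$, and set \[ \beta_{eq}=\beta_0\frac{\beta_a/\kappa}{1+\beta_a/\kappa}+\beta_a\frac{1}{1+\beta_a/\kappa}. \] If $(p_i^{ss},q_i^{ss})_{i=1}^N$ is a steady state of the SAIS system \[ \dot p_i=\beta_0(1-p_i-q_i)\sum_{j=1}^N a_{ij}p_j+\beta_a q_i\sum_{j=1}^N a_{ij}p_j-\delta p_i,\qquad \dot q_i=\kappa(1-p_i-q_i)\sum_{j=1}^N a_{ij}p_j-\beta_a q_i\sum_{j=1}^N a_{ij}p_j, \] then its infection probabilities satisfy the steady-state equations of the N-intertwined SIS model $\dot p_i=\beta(1-p_i)\sum_j a_{ij}p_j-\delta p_i$ with infection rate $\beta=\beta_{eq}$, namely \[ \beta_{eq}(1-p_i^{ss})\sum_{j=1}^N a_{ij}p_j^{ss}-\delta p_i^{ss}=0,\qquad\text{equivalently}\qquad \frac{\beta_{eq}}{\delta}\sum_{j=1}^N a_{ij}p_j^{ss}=\frac{p_i^{ss}}{1-p_i^{ss}}\ (p_i^{ss}\neq1), \] for all $i\in\{1,\dots,N\}$.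
   Context: $p_i$ and $q_i$ are the (mean-field) probabilities that individual $i$ is infected and alert; $a_{ij}=1$ iff individual $j$ is a neighbor of individual $i$. $\beta_0$: infection rate of susceptible individuals; $\beta_a$: infection rate of alert individuals; $\kappa$: alerting rate; $\delta$: curing rate. *)

theory Defs
  imports Complex_Main
begin

definition beta_eq :: "real \<Rightarrow> real \<Rightarrow> real \<Rightarrow> real" where
  "beta_eq \<beta>\<^sub>0 \<beta>\<^sub>a \<kappa> =
     \<beta>\<^sub>0 * ((\<beta>\<^sub>a / \<kappa>) / (1 + \<beta>\<^sub>a / \<kappa>)) + \<beta>\<^sub>a * (1 / (1 + \<beta>\<^sub>a / \<kappa>))"

end

theory Submission
  imports Defs
begin

text \<open>At a steady state the alerting equation balances the flows
  \<open>\<kappa> s S = \<beta>\<^sub>a q S\<close> into and out of the alert compartment, where \<open>s = 1 - p - q\<close>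
  is the susceptible fraction and \<open>S\<close> the infection pressure. Hence \<open>s S\<close> and
  \<open>q S\<close> are in the ratio \<open>\<beta>\<^sub>a : \<kappa>\<close>, and the total infection flow
  \<open>\<beta>\<^sub>0 s S + \<beta>\<^sub>a q S\<close> into node \<open>i\<close> equals \<open>\<beta>\<^sub>e\<^sub>q (s + q) S = \<beta>\<^sub>e\<^sub>q (1 - p) S\<close>,
  which is the SIS steady-state equation.\<close>

lemma beta_eq_closed_form:
  assumes "\<kappa> > 0" and "\<beta>\<^sub>a \<ge> 0"
  shows "beta_eq \<beta>\<^sub>0 \<beta>\<^sub>a \<kappa> = \<beta>\<^sub>a * (\<beta>\<^sub>0 + \<kappa>) / (\<kappa> + \<beta>\<^sub>a)"
proof -
  have "1 + \<beta>\<^sub>a / \<kappa> = (\<kappa> + \<beta>\<^sub>a) / \<kappa>"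
    using assms(1) by (simp add: field_simps)
  moreover have "\<kappa> + \<beta>\<^sub>a \<noteq> 0"
    using assms by linarith
  ultimately show ?thesis
    using assms(1) unfolding beta_eq_def by (simp add: divide_simps) (simp add: algebra_simps)
qed

lemma SAIS_steady_state_imp_SIS_steady_state:
  fixes \<beta>\<^sub>0 \<beta>\<^sub>a \<delta> \<kappa> p q S :: real
  assumes "\<kappa> > 0" and "\<beta>\<^sub>a \<ge> 0"
    and infected: "\<beta>\<^sub>0 * (1 - p - q) * S + \<beta>\<^sub>a * q * S - \<delta> * p = 0"
    and alert: "\<kappa> * (1 - p - q) * S - \<beta>\<^sub>a * q * S = 0"
  shows "beta_eq \<beta>\<^sub>0 \<beta>\<^sub>a \<kappa> * (1 - p) * S - \<delta> * p = 0"
proof -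
  have pos: "\<kappa> + \<beta>\<^sub>a > 0" using assms(1,2) by linarith
  have "(\<kappa> + \<beta>\<^sub>a) * (beta_eq \<beta>\<^sub>0 \<beta>\<^sub>a \<kappa> * (1 - p) * S - \<delta> * p)
      = \<beta>\<^sub>a * (\<beta>\<^sub>0 + \<kappa>) * (1 - p) * S - (\<kappa> + \<beta>\<^sub>a) * (\<delta> * p)"
    using pos by (simp add: beta_eq_closed_form[OF assms(1,2)] field_simps)
  also have "\<dots> = \<beta>\<^sub>a * (\<beta>\<^sub>0 + \<kappa>) * (1 - p) * S
      - (\<kappa> + \<beta>\<^sub>a) * (\<beta>\<^sub>0 * (1 - p - q) * S + \<beta>\<^sub>a * q * S)"
    using infected by (simp add: eq_iff_diff_eq_0 [symmetric])
  also have "\<dots> = (\<beta>\<^sub>0 - \<beta>\<^sub>a) * (\<beta>\<^sub>a * q * S - \<kappa> * (1 - p - q) * S)"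
    by (simp add: algebra_simps)
  also have "\<dots> = 0"
    using alert by (simp add: right_diff_distrib [symmetric]) argo
  finally show ?thesis
    using pos by simp
qed

lemma SIS_steady_state_ratio:
  fixes \<beta> \<delta> p S :: real
  assumes "\<beta> * (1 - p) * S - \<delta> * p = 0" and "\<delta> > 0" and "p \<noteq> 1"
  shows "\<beta> / \<delta> * S = p / (1 - p)"
proof -
  have "\<beta> * S * (1 - p) = \<delta> * p"
    using assms(1) by (simp add: mult_ac)
  moreover have "1 - p \<noteq> 0"
    using assms(3) by simp
  ultimately show ?thesis
    using assms(2) by (simp add: frac_eq_eq mult.commute)
qed

theorem theorem4:
  fixes N :: nat and a :: "nat \<Rightarrow> nat \<Rightarrow> real"
    and \<beta>\<^sub>0 \<beta>\<^sub>a \<delta> \<kappa> :: real and p q :: "nat \<Rightarrow> real"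
  assumes adj: "\<forall>i\<in>{1..N}. \<forall>j\<in>{1..N}. a i j = 0 \<or> a i j = 1"
    and diag: "\<forall>i\<in>{1..N}. a i i = 0"
    and b0: "\<beta>\<^sub>0 > 0" and d: "\<delta> > 0" and k: "\<kappa> > 0"
    and ba: "0 \<le> \<beta>\<^sub>a" "\<beta>\<^sub>a < \<beta>\<^sub>0"
    and ss_p: "\<forall>i\<in>{1..N}. \<beta>\<^sub>0 * (1 - p i - q i) * (\<Sum>j=1..N. a i j * p j)
                 + \<beta>\<^sub>a * q i * (\<Sum>j=1..N. a i j * p j) - \<delta> * p i = 0"
    and ss_q: "\<forall>i\<in>{1..N}. \<kappa> * (1 - p i - q i) * (\<Sum>j=1..N. a i j * p j)
                 - \<beta>\<^sub>a * q i * (\<Sum>j=1..N. a i j * p j) = 0"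
  shows "\<forall>i\<in>{1..N}.
           beta_eq \<beta>\<^sub>0 \<beta>\<^sub>a \<kappa> * (1 - p i) * (\<Sum>j=1..N. a i j * p j) - \<delta> * p i = 0
         \<and> (p i \<noteq> 1 \<longrightarrow>
              beta_eq \<beta>\<^sub>0 \<beta>\<^sub>a \<kappa> / \<delta> * (\<Sum>j=1..N. a i j * p j) = p i / (1 - p i))"
proof
  fix i assume i: "i \<in> {1..N}"
  have SIS: "beta_eq \<beta>\<^sub>0 \<beta>\<^sub>a \<kappa> * (1 - p i) * (\<Sum>j=1..N. a i j * p j) - \<delta> * p i = 0"
    using SAIS_steady_state_imp_SIS_steady_state[OF k ba(1)] ss_p ss_q i by blast
  then show "beta_eq \<beta>\<^sub>0 \<beta>\<^sub>a \<kappa> * (1 - p i) * (\<Sum>j=1..N. a i j * p j) - \<delta> * p i = 0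
      \<and> (p i \<noteq> 1 \<longrightarrow>
           beta_eq \<beta>\<^sub>0 \<beta>\<^sub>a \<kappa> / \<delta> * (\<Sum>j=1..N. a i j * p j) = p i / (1 - p i))"
    using SIS_steady_state_ratio[OF SIS d] by blast
qed

end
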